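(* Let $(T,E)$ be the $3$-regular tree, let $x\in T$, and let $y$ be a neighbor of $x$. For every integer $t\ge 0$, the Fibonacci vectors $s_t(x)$ and $r_t(x,y)$ have non-negative coordinates, and $$s_t(x)_- = f_{2t},\quad s_t(x)_+ = f_{2t+2},\quad r_t(x,y)_- = f_{2t-1},\quad r_t(x,y)_+ = f_{2t+1}.$$
   Context: $(f_i)_{i\in\mathbb Z}$ denotes the Fibonacci numbers with $f_0=0$, $f_1=1$ and $f_{i+1}=f_i+f_{i-1}$ for all $i\in\mathbb Z$ (so $f_{-1}=1$). $(T,E)$ is the $3$-regular tree (every vertex has exactly three neighbors); $d(x,z)$ is the graph distance. $K_0(T)$ is the free abelian group with basis $\{s(x): x\in T\}$; an element is written $a=\sum_x a_x s(x)$ with finitely many nonzero $a_x\in\mathbb Z$. For $y\in T$ the reflection $\sigma^y:K_0(T)\to K_0(T)$ is given by $(\sigma^y a)_z=a_z$ for $z\neq y$ and $(\sigma^y a)_y=-a_y+\sum_{\{z,y\}\in E}a_z$. For $x\in T$, $\Sigma^x$ denotes the composition of all $\sigma^y$ with $d(x,y)$ even, and $\underline\Sigma^x$ the composition of all $\sigma^y$ with $d(x,y)$ odd (these reflections pairwise commute, so the compositions are well defined on $K_0(T)$). Define $s_0(x)=s(x)$ and $s_{t+1}(x)=\underline\Sigma^x s_t(x)$ if $t$ is even, $s_{t+1}(x)=\Sigma^x s_t(x)$ if $t$ is odd. For neighbors $x,y$ define $r_0(x,y)=s(x)+s(y)$ and $r_{t+1}(x,y)=\underline\Sigma^x r_t(x,y)$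 if $t$ is even, $r_{t+1}(x,y)=\Sigma^x r_t(x,y)$ if $t$ is odd. For such a vector $a$ (equal to $s_t(x)$ or $r_t(x,y)$) put $a_-=\sum_{z:\,d(x,z)\not\equiv t \pmod 2} a_z$ and $a_+=\sum_{z:\,d(x,z)\equiv t\pmod 2} a_z$. *)

theory Defs
  imports "HOL-Number_Theory.Fib"
begin

text \<open>f_0 = 0, f_1 = 1, f_{i+1} = f_i + f_{i-1} for all integers i;
  for negative indices this forces f_{-n} = (-1)^(n+1) f_n.\<close>
definition fibz :: "int \<Rightarrow> int" where
  "fibz i = (if 0 \<le> i then int (fib (nat i))
             else (-1) ^ (nat (- i) + 1) * int (fib (nat (- i))))"

text \<open>Model: reduced words over the alphabet {0,1,2} (no two consecutive equal letters),
  i.e. the Cayley graph of the free product of three copies of Z/2. Two words are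
  adjacent iff one is obtained from the other by appending one letter. This is the
  3-regular tree.\<close>

definition reduced_word :: "nat list \<Rightarrow> bool" where
  "reduced_word w \<longleftrightarrow> (\<forall>c\<in>set w. c < 3) \<and> (\<forall>i. Suc i < length w \<longrightarrow> w ! i \<noteq> w ! Suc i)"

typedef tree3 = "{w. reduced_word w}"
  by (rule exI[of _ "[]"]) (simp add: reduced_word_def)

definition adj :: "tree3 \<Rightarrow> tree3 \<Rightarrow> bool" where
  "adj u v \<longleftrightarrow> (\<exists>c. Rep_tree3 v = Rep_tree3 u @ [c]) \<or> (\<exists>c. Rep_tree3 u = Rep_tree3 v @ [c])"

definition tdist :: "tree3 \<Rightarrow> tree3 \<Rightarrow> nat" where
  "tdist u v = (LEAST n. (adj ^^ n) u v)"

text \<open>Elements of K_0(T) are finitely supported functions tree3 \<Rightarrow> int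
  (a z is the coefficient of s(z)). The basis vector s(x):\<close>
definition sbasis :: "tree3 \<Rightarrow> tree3 \<Rightarrow> int" where
  "sbasis x = (\<lambda>z. if z = x then 1 else 0)"

definition refl :: "tree3 \<Rightarrow> (tree3 \<Rightarrow> int) \<Rightarrow> tree3 \<Rightarrow> int" where
  "refl y a = a(y := - a y + (\<Sum>z\<in>{z. adj z y}. a z))"

text \<open>Composition of all reflections sigma^y with y in a set of pairwise non-adjacent
  vertices given by P. Since these reflections pairwise commute and sigma^y changes only
  coordinate y using coordinates at neighbours of y (which are not in P), the composition
  acts coordinatewise as below.\<close>
definition refl_all :: "(tree3 \<Rightarrow> bool) \<Rightarrow> (tree3 \<Rightarrow> int) \<Rightarrow> tree3 \<Rightarrow> int" where
  "refl_all P a = (\<lambda>y. if P y then - a y + (\<Sum>z\<in>{z. adj z y}. a z) else a y)"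

definition Sigma_even :: "tree3 \<Rightarrow> (tree3 \<Rightarrow> int) \<Rightarrow> tree3 \<Rightarrow> int" where
  "Sigma_even x = refl_all (\<lambda>y. even (tdist x y))"

definition Sigma_odd :: "tree3 \<Rightarrow> (tree3 \<Rightarrow> int) \<Rightarrow> tree3 \<Rightarrow> int" where
  "Sigma_odd x = refl_all (\<lambda>y. odd (tdist x y))"

primrec svec :: "tree3 \<Rightarrow> nat \<Rightarrow> tree3 \<Rightarrow> int" where
  "svec x 0 = sbasis x"
| "svec x (Suc t) = (if even t then Sigma_odd x (svec x t) else Sigma_even x (svec x t))"

primrec rvec :: "tree3 \<Rightarrow> tree3 \<Rightarrow> nat \<Rightarrow> tree3 \<Rightarrow> int" where
  "rvec x y 0 = (\<lambda>z. sbasis x z + sbasis y z)"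
| "rvec x y (Suc t) = (if even t then Sigma_odd x (rvec x y t) else Sigma_even x (rvec x y t))"

definition minus_part :: "tree3 \<Rightarrow> nat \<Rightarrow> (tree3 \<Rightarrow> int) \<Rightarrow> int" where
  "minus_part x t a = (\<Sum>z\<in>{z. a z \<noteq> 0 \<and> \<not> tdist x z mod 2 = t mod 2}. a z)"

definition plus_part :: "tree3 \<Rightarrow> nat \<Rightarrow> (tree3 \<Rightarrow> int) \<Rightarrow> int" where
  "plus_part x t a = (\<Sum>z\<in>{z. a z \<noteq> 0 \<and> tdist x z mod 2 = t mod 2}. a z)"

end

theory Submission
  imports Defs
begin

text \<open>Each step of both recursions reflects at all vertices of one colour class P of the
  bipartite tree. Double counting over the edges, using that every vertex has three neighbours,
  shows that the sum over P becomes 3 a_+ - a_- while the sum over the other class is unchanged;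
  as the classes alternate, the pair (a_-, a_+) follows the recurrence f(n+4) = 3 f(n+2) - f(n)
  of every other Fibonacci number. Non-negativity propagates through the invariant that, on the
  class about to be reflected, every coordinate is at most the sum over any two of its
  neighbours: the reflected coordinate is then at least the value at the remaining neighbour,
  which in turn yields the invariant for the other class.\<close>

section \<open>The tree\<close>

lemma reduced_word_snoc_iff:
  "reduced_word (w @ [c]) \<longleftrightarrow> reduced_word w \<and> c < 3 \<and> (w \<noteq> [] \<longrightarrow> last w \<noteq> c)"
proof (cases w rule: rev_cases)
  case (snoc v d)
  have "(\<forall>i. Suc i < length (v @ [d, c]) \<longrightarrow> (v @ [d, c]) ! i \<noteq> (v @ [d, c]) ! Suc i) \<longleftrightarrow>
        (\<forall>i. Suc i < length (v @ [d]) \<longrightarrow> (v @ [d]) ! i \<noteq> (v @ [d]) ! Suc i) \<and> d \<noteq> c"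
    (is "?L \<longleftrightarrow> ?R")
  proof
    assume L: ?L
    have "d \<noteq> c" using L[rule_format, of "length v"] by (simp add: nth_append)
    moreover have "(v @ [d]) ! i \<noteq> (v @ [d]) ! Suc i" if "Suc i < length (v @ [d])" for i
      using L[rule_format, of i] that by (simp add: nth_append split: if_splits)
    ultimately show ?R by blast
  next
    assume R: ?R
    show ?L
    proof (intro allI impI)
      fix i assume i: "Suc i < length (v @ [d, c])"
      show "(v @ [d, c]) ! i \<noteq> (v @ [d, c]) ! Suc i"
      proof (cases "Suc i < length (v @ [d])")
        case True thus ?thesis using R by (auto simp: nth_append split: if_splits)
      next
        case False
        hence "i = length v" using i by simp
        thus ?thesis using R by (simp add: nth_append)
      qed
    qed
  qed
  thus ?thesis using snoc by (auto simp: reduced_word_def)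
qed (simp add: reduced_word_def)

lemma adj_sym: "adj u v \<Longrightarrow> adj v u"
  by (auto simp: adj_def)

lemma adj_length:
  "adj u v \<Longrightarrow>
    length (Rep_tree3 u) = Suc (length (Rep_tree3 v)) \<or> length (Rep_tree3 v) = Suc (length (Rep_tree3 u))"
  by (auto simp: adj_def)

lemma adj_irrefl: "adj u v \<Longrightarrow> u \<noteq> v"
  using adj_length by fastforce

lemma relpowp_adj_sym: "(adj ^^ n) u v \<Longrightarrow> (adj ^^ n) v u"
proof (induction n arbitrary: v)
  case (Suc n)
  then obtain m where "(adj ^^ n) u m" "adj m v" by (auto elim: relpowp_Suc_E)
  thus ?case using Suc.IH adj_sym relpowp_Suc_I2 by metis
qed simp

lemma relpowp_adj_root: "(adj ^^ length (Rep_tree3 u)) u (Abs_tree3 [])"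
proof (induction "length (Rep_tree3 u)" arbitrary: u)
  case 0
  hence "u = Abs_tree3 []" by (metis Rep_tree3_inverse length_0_conv)
  thus ?case using 0 by simp
next
  case (Suc n)
  then obtain w c where wc: "Rep_tree3 u = w @ [c]"
    by (cases "Rep_tree3 u" rule: rev_cases) auto
  have "reduced_word w"
    using Rep_tree3[of u] wc reduced_word_snoc_iff by auto
  hence w: "Rep_tree3 (Abs_tree3 w) = w"
    by (simp add: Abs_tree3_inverse)
  have "adj u (Abs_tree3 w)"
    using wc w by (auto simp: adj_def)
  moreover have "(adj ^^ n) (Abs_tree3 w) (Abs_tree3 [])"
    using Suc.hyps(1)[of "Abs_tree3 w"] Suc.hyps(2) wc w by simp
  ultimately show ?case
    using Suc.hyps(2) by (metis relpowp_Suc_I2)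
qed

lemma tdist_path: "(adj ^^ tdist u v) u v"
proof -
  have "(adj ^^ (length (Rep_tree3 u) + length (Rep_tree3 v))) u v"
    unfolding relpowp_add using relpowp_adj_root[of u] relpowp_adj_sym[OF relpowp_adj_root[of v]]
    by auto
  thus ?thesis
    unfolding tdist_def by (rule LeastI)
qed

lemma relpowp_adj_parity:
  "(adj ^^ n) u v \<Longrightarrow> even n \<longleftrightarrow> even (length (Rep_tree3 u) + length (Rep_tree3 v))"
proof (induction n arbitrary: v)
  case (Suc n)
  then obtain m where m: "(adj ^^ n) u m" "adj m v" by (auto elim: relpowp_Suc_E)
  have "even n \<longleftrightarrow> even (length (Rep_tree3 u) + length (Rep_tree3 m))"
    by (rule Suc.IH[OF m(1)])
  with adj_length[OF m(2)] show ?case by auto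
qed simp

lemma even_tdist_iff: "even (tdist u v) \<longleftrightarrow> even (length (Rep_tree3 u) + length (Rep_tree3 v))"
  using relpowp_adj_parity[OF tdist_path] .

lemma adj_tdist_parity: "adj u v \<Longrightarrow> even (tdist x u) \<longleftrightarrow> odd (tdist x v)"
  using adj_length[of u v] even_tdist_iff[of x u] even_tdist_iff[of x v] by auto

lemma tdist_self: "tdist x x = 0"
  by (simp add: tdist_def)

definition neighbours :: "tree3 \<Rightarrow> tree3 set" where
  "neighbours v = {z. adj z v}"

lemma Rep_tree3_neighbours:
  "Rep_tree3 ` neighbours v =
     (\<lambda>c. Rep_tree3 v @ [c]) ` {c. c < 3 \<and> (Rep_tree3 v \<noteq> [] \<longrightarrow> c \<noteq> last (Rep_tree3 v))}
     \<union> (if Rep_tree3 v = [] then {} else {butlast (Rep_tree3 v)})"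
  (is "_ = ?children \<union> ?parent")
proof -
  let ?w = "Rep_tree3 v"
  let ?N = "{u \<in> {u. reduced_word u}. (\<exists>c. u = ?w @ [c]) \<or> (\<exists>c. ?w = u @ [c])}"
  have "Rep_tree3 ` neighbours v =
      {u \<in> range Rep_tree3. (\<exists>c. u = ?w @ [c]) \<or> (\<exists>c. ?w = u @ [c])}"
    by (auto simp: neighbours_def adj_def)
  also have "range Rep_tree3 = {u. reduced_word u}"
    using type_definition.Rep_range[OF type_definition_tree3] .
  also have "?N = ?children \<union> ?parent"
  proof (intro set_eqI iffI)
    fix u assume "u \<in> ?N"
    then consider c where "reduced_word (?w @ [c])" "u = ?w @ [c]" | c where "?w = u @ [c]"
      by blast
    thus "u \<in> ?children \<union> ?parent"
      by cases (auto simp: reduced_word_snoc_iff)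
  next
    have w: "reduced_word ?w" using Rep_tree3 by simp
    fix u assume "u \<in> ?children \<union> ?parent"
    then consider c where "u = ?w @ [c]" "c < 3" "?w \<noteq> [] \<longrightarrow> c \<noteq> last ?w"
      | "?w \<noteq> []" "u = butlast ?w"
      by (auto split: if_splits)
    thus "u \<in> ?N"
    proof cases
      case 2
      hence "?w = u @ [last ?w]" by simp
      thus ?thesis using w reduced_word_snoc_iff[of u "last ?w"] by auto
    qed (use w in \<open>auto simp: reduced_word_snoc_iff\<close>)
  qed
  finally show ?thesis .
qed

lemma finite_neighbours: "finite (neighbours v)"
  and card_neighbours: "card (neighbours v) = 3"
proof -
  let ?w = "Rep_tree3 v"
  let ?L = "{c. c < 3 \<and> (?w \<noteq> [] \<longrightarrow> c \<noteq> last ?w)}"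
  have "last ?w < 3" if "?w \<noteq> []"
    using Rep_tree3[of v] that by (auto simp: reduced_word_def)
  moreover have "{c. c < 3 \<and> c \<noteq> d} = {..<3::nat} - {d}" for d
    by auto
  ultimately have card_L: "card ?L = (if ?w = [] then 3 else 2)"
    by (auto simp: card_Diff_singleton)
  let ?C = "(\<lambda>c. ?w @ [c]) ` ?L"
  have "card ?C = card ?L"
    by (rule card_image) (simp add: inj_on_def)
  moreover have "finite ?C"
    by (rule finite_imageI) simp
  moreover have "butlast ?w \<notin> ?C"
    by (auto dest: arg_cong[of _ _ length])
  ultimately have "card (Rep_tree3 ` neighbours v) = 3" "finite (Rep_tree3 ` neighbours v)"
    unfolding Rep_tree3_neighbours using card_L
    by (simp_all only: if_split_asm Un_empty_right Un_insert_right card.insert finite_insert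
        split: if_split) auto
  moreover have "inj_on Rep_tree3 (neighbours v)"
    by (simp add: Rep_tree3_inject inj_on_def)
  ultimately show "finite (neighbours v)" "card (neighbours v) = 3"
    by (simp_all add: card_image finite_image_iff)
qed

lemma neighbour_avoiding: "\<exists>u. adj u v \<and> u \<noteq> a \<and> u \<noteq> b"
proof -
  have "card {a, b} < card (neighbours v)"
    using card_neighbours[of v] by (simp add: card_insert_if)
  hence "\<not> neighbours v \<subseteq> {a, b}"
    by (meson card_mono finite.emptyI finite.insertI leD)
  thus ?thesis by (auto simp: neighbours_def)
qed

section \<open>Fibonacci numbers on the integers\<close>

lemma fibz_nat: "fibz (int n) = int (fib n)"
  by (simp add: fibz_def)

lemma fibz_neg: "fibz (- int n) = (-1) ^ (n + 1) * int (fib n)"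
  by (cases n) (simp_all add: fibz_def nat_add_distrib)

lemma fibz_0: "fibz 0 = 0"
  and fibz_1: "fibz 1 = 1"
  and fibz_2: "fibz 2 = 1"
  and fibz_minus_1: "fibz (-1) = 1"
  by (simp_all add: fibz_def numeral_eq_Suc)

lemma fibz_rec: "fibz (i + 2) = fibz (i + 1) + fibz i"
proof -
  consider n where "i = int n" | "i = -1" | n where "i = - int (n + 2)"
  proof -
    have "i = int (nat i)" if "i \<ge> 0" using that by simp
    moreover have "i = - int (nat (- i - 2) + 2)" if "i \<le> -2" using that by simp
    ultimately show thesis using that by fastforce
  qed
  thus ?thesis
  proof cases
    case 1
    thus ?thesis
      using fibz_nat[of n] fibz_nat[of "n + 1"] fibz_nat[of "n + 2"] by (simp add: add.commute)
  next
    case 2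
    thus ?thesis
      using fibz_nat[of 0] fibz_nat[of 1] fibz_neg[of 1] by simp
  next
    case 3
    have "fibz (- int n) = fibz (- int (n + 1)) + fibz (- int (n + 2))"
      unfolding fibz_neg by (simp add: algebra_simps)
    moreover have "i + 2 = - int n" "i + 1 = - int (n + 1)"
      using 3 by simp_all
    ultimately show ?thesis
      using 3 by metis
  qed
qed

lemma fibz_rec2: "fibz (i + 4) = 3 * fibz (i + 2) - fibz i"
  using fibz_rec[of i] fibz_rec[of "i + 1"] fibz_rec[of "i + 2"]
  by (simp add: add.assoc)

section \<open>Reflecting one class of a bipartition\<close>

definition bipartition :: "(tree3 \<Rightarrow> bool) \<Rightarrow> bool" where
  "bipartition P \<longleftrightarrow> (\<forall>u v. adj u v \<longrightarrow> (P u \<longleftrightarrow> \<not> P v))"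

definition side_sum :: "(tree3 \<Rightarrow> bool) \<Rightarrow> (tree3 \<Rightarrow> int) \<Rightarrow> int" where
  "side_sum P a = (\<Sum>z | a z \<noteq> 0 \<and> P z. a z)"

lemma refl_all_neighbours:
  "refl_all P a y = (if P y then - a y + (\<Sum>z\<in>neighbours y. a z) else a y)"
  by (simp add: refl_all_def neighbours_def)

lemma side_sum_superset:
  assumes "finite B" "{z. a z \<noteq> 0} \<subseteq> B"
  shows "side_sum P a = (\<Sum>z | z \<in> B \<and> P z. a z)"
  unfolding side_sum_def using assms by (intro sum.mono_neutral_left) auto

lemma support_refl_all_subset:
  "{z. refl_all P a z \<noteq> 0} \<subseteq> {z. a z \<noteq> 0} \<union> \<Union> (neighbours ` {z. a z \<noteq> 0})"
proof
  fix z assume z: "z \<in> {z. refl_all P a z \<noteq> 0}"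
  show "z \<in> {z. a z \<noteq> 0} \<union> \<Union> (neighbours ` {z. a z \<noteq> 0})"
  proof (cases "a z = 0")
    case True
    with z have "(\<Sum>w\<in>neighbours z. a w) \<noteq> 0"
      by (auto simp: refl_all_neighbours split: if_splits)
    then obtain w where "w \<in> neighbours z" "a w \<noteq> 0"
      by (meson sum.neutral)
    thus ?thesis by (auto simp: neighbours_def intro: adj_sym)
  qed simp
qed

lemma finite_support_refl_all:
  "finite {z. a z \<noteq> 0} \<Longrightarrow> finite {z. refl_all P a z \<noteq> 0}"
  by (rule finite_subset[OF support_refl_all_subset]) (simp add: finite_neighbours)

lemma side_sum_refl_all_other:
  "side_sum (\<lambda>z. \<not> P z) (refl_all P a) = side_sum (\<lambda>z. \<not> P z) a"
  unfolding side_sum_def by (rule sum.cong) (auto simp: refl_all_def)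

lemma sum_neighbour_sums:
  fixes a :: "tree3 \<Rightarrow> 'a::comm_semiring_1"
  assumes P: "bipartition P" and A: "finite A" "{z. a z \<noteq> 0} \<subseteq> A"
    and B: "finite B" "\<Union> (neighbours ` A) \<subseteq> B"
  shows "(\<Sum>z | z \<in> B \<and> P z. \<Sum>w\<in>neighbours z. a w) = 3 * (\<Sum>w | w \<in> A \<and> \<not> P w. a w)"
proof -
  let ?C = "{z. z \<in> B \<and> P z}"
  have "(\<Sum>z\<in>?C. \<Sum>w\<in>neighbours z. a w) = (\<Sum>z\<in>?C. \<Sum>w\<in>A. if adj w z then a w else 0)"
  proof (rule sum.cong[OF refl])
    fix z
    have "(\<Sum>w\<in>neighbours z. a w) = (\<Sum>w | w \<in> A \<and> adj w z. a w)"
      using A finite_neighbours by (intro sum.mono_neutral_right) (auto simp: neighbours_def)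
    thus "(\<Sum>w\<in>neighbours z. a w) = (\<Sum>w\<in>A. if adj w z then a w else 0)"
      using A by (simp add: sum.inter_filter)
  qed
  also have "\<dots> = (\<Sum>w\<in>A. \<Sum>z\<in>?C. if adj w z then a w else 0)"
    by (rule sum.swap)
  also have "\<dots> = (\<Sum>w\<in>A. if P w then 0 else 3 * a w)"
  proof (rule sum.cong[OF refl])
    fix w assume "w \<in> A"
    have "{z \<in> ?C. adj w z} = (if P w then {} else neighbours w)"
      using P B \<open>w \<in> A\<close> by (auto simp: bipartition_def neighbours_def intro: adj_sym)
    moreover have "(\<Sum>z\<in>?C. if adj w z then a w else 0) = (\<Sum>z\<in>{z \<in> ?C. adj w z}. a w)"
      using B by (simp add: sum.inter_filter[symmetric])
    ultimately show "(\<Sum>z\<in>?C. if adj w z then a w else 0) = (if P w then 0 else 3 * a w)"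
      using card_neighbours[of w] by (simp add: sum_constant)
  qed
  also have "\<dots> = (\<Sum>w\<in>A. 3 * (if \<not> P w then a w else 0))"
    by (rule sum.cong) auto
  also have "\<dots> = 3 * (\<Sum>w | w \<in> A \<and> \<not> P w. a w)"
    by (simp only: sum_distrib_left[symmetric] sum.inter_filter[OF A(1)])
  finally show ?thesis .
qed

lemma side_sum_refl_all:
  assumes "bipartition P" "finite {z. a z \<noteq> 0}"
  shows "side_sum P (refl_all P a) = 3 * side_sum (\<lambda>z. \<not> P z) a - side_sum P a"
proof -
  let ?A = "{z. a z \<noteq> 0}"
  let ?B = "?A \<union> \<Union> (neighbours ` ?A)"
  have B: "finite ?B"
    using assms finite_neighbours by blast
  let ?C = "{z. z \<in> ?B \<and> P z}"
  have "side_sum P (refl_all P a) = (\<Sum>z\<in>?C. refl_all P a z)"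
    using B support_refl_all_subset by (rule side_sum_superset)
  also have "\<dots> = (\<Sum>z\<in>?C. \<Sum>w\<in>neighbours z. a w) - (\<Sum>z\<in>?C. a z)"
    by (simp add: refl_all_neighbours sum_subtractf[symmetric])
  also have "(\<Sum>z\<in>?C. \<Sum>w\<in>neighbours z. a w) = 3 * side_sum (\<lambda>z. \<not> P z) a"
    using sum_neighbour_sums[OF assms(1) assms(2) subset_refl B] side_sum_superset[OF assms(2)]
    by simp
  also have "(\<Sum>z\<in>?C. a z) = side_sum P a"
    by (rule side_sum_superset[OF B, symmetric]) blast
  finally show ?thesis .
qed

definition neighbour_bounded :: "(tree3 \<Rightarrow> bool) \<Rightarrow> (tree3 \<Rightarrow> int) \<Rightarrow> bool" where
  "neighbour_bounded P a \<longleftrightarrow>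
     (\<forall>z w. P z \<longrightarrow> adj w z \<longrightarrow> a z \<le> (\<Sum>u\<in>neighbours z - {w}. a u))"

lemma refl_all_ge_neighbour:
  assumes "neighbour_bounded P a" "P z" "adj w z"
  shows "a w \<le> refl_all P a z"
proof -
  have "w \<in> neighbours z" using assms(3) by (simp add: neighbours_def)
  hence "refl_all P a z = - a z + a w + (\<Sum>u\<in>neighbours z - {w}. a u)"
    using assms(2) sum.remove[OF finite_neighbours] by (simp add: refl_all_neighbours)
  thus ?thesis
    using assms by (auto simp: neighbour_bounded_def)
qed

lemma nonneg_refl_all:
  assumes "\<forall>z. 0 \<le> a z" "neighbour_bounded P a"
  shows "0 \<le> refl_all P a z"
proof (cases "P z")
  case True
  obtain w where "adj w z"
    using neighbour_avoiding by blast
  thus ?thesis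
    using assms refl_all_ge_neighbour[OF assms(2) True] by (meson order_trans)
qed (simp add: assms refl_all_neighbours)

lemma neighbour_bounded_refl_all:
  assumes "\<forall>z. 0 \<le> a z" "neighbour_bounded P a" "bipartition P"
  shows "neighbour_bounded (\<lambda>z. \<not> P z) (refl_all P a)"
  unfolding neighbour_bounded_def
proof (intro allI impI)
  fix z w assume "\<not> P z" "adj w z"
  obtain u where u: "adj u z" "u \<noteq> w"
    using neighbour_avoiding by blast
  hence "P u"
    using \<open>\<not> P z\<close> assms(3) by (auto simp: bipartition_def)
  have "refl_all P a z = a z"
    using \<open>\<not> P z\<close> by (simp add: refl_all_def)
  also have "\<dots> \<le> refl_all P a u"
    using refl_all_ge_neighbour[OF assms(2) \<open>P u\<close>] u(1) adj_sym by blast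
  also have "\<dots> \<le> (\<Sum>v\<in>neighbours z - {w}. refl_all P a v)"
    using u nonneg_refl_all[OF assms(1,2)] finite_neighbours
    by (intro member_le_sum) (auto simp: neighbours_def)
  finally show "refl_all P a z \<le> (\<Sum>v\<in>neighbours z - {w}. refl_all P a v)" .
qed

lemma side_sum_sbasis: "side_sum P (sbasis x) = (if P x then 1 else 0)"
proof -
  have "{z. sbasis x z \<noteq> 0 \<and> P z} = (if P x then {x} else {})"
    by (auto simp: sbasis_def)
  thus ?thesis
    by (simp add: side_sum_def sbasis_def)
qed

lemma finite_support_sbasis: "finite {z. sbasis x z \<noteq> 0}"
  by (simp add: sbasis_def)

lemma side_sum_add:
  assumes "finite {z. a z \<noteq> 0}" "finite {z. b z \<noteq> 0}"
  shows "side_sum P (\<lambda>z. a z + b z) = side_sum P a + side_sum P b"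
proof -
  let ?B = "{z. a z \<noteq> 0} \<union> {z. b z \<noteq> 0}"
  have "finite ?B" using assms by simp
  thus ?thesis
    by (subst (1 2 3) side_sum_superset[of ?B]) (auto simp: sum.distrib)
qed

section \<open>Fibonacci vectors\<close>

definition minus_side :: "tree3 \<Rightarrow> nat \<Rightarrow> tree3 \<Rightarrow> bool" where
  "minus_side x t z \<longleftrightarrow> odd (tdist x z + t)"

lemma bipartition_minus_side: "bipartition (minus_side x t)"
  unfolding bipartition_def
proof (intro allI impI)
  fix u v assume "adj u v"
  thus "minus_side x t u \<longleftrightarrow> \<not> minus_side x t v"
    using adj_tdist_parity[of u v x] unfolding minus_side_def by simp
qed

lemma minus_side_Suc: "minus_side x (Suc t) = (\<lambda>z. \<not> minus_side x t z)"
  unfolding minus_side_def by simp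

lemma minus_side_self: "minus_side x t x \<longleftrightarrow> odd t"
  unfolding minus_side_def tdist_self by simp

lemma minus_side_adj: "adj x y \<Longrightarrow> minus_side x t y \<longleftrightarrow> even t"
  using bipartition_minus_side[of x t] minus_side_self[of x t] by (auto simp: bipartition_def)

lemma Sigma_eq_refl_all_minus_side:
  "(if even t then Sigma_odd x else Sigma_even x) = refl_all (minus_side x t)"
proof -
  have "(\<lambda>y. odd (tdist x y)) = minus_side x t" if "even t"
    using that unfolding minus_side_def by simp
  moreover have "(\<lambda>y. even (tdist x y)) = minus_side x t" if "odd t"
    using that unfolding minus_side_def by simp
  ultimately show ?thesis
    by (simp add: Sigma_odd_def Sigma_even_def)
qed

lemma svec_Suc: "svec x (Suc t) = refl_all (minus_side x t) (svec x t)"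
  using Sigma_eq_refl_all_minus_side[of t x] by (simp split: if_splits)

lemma rvec_Suc: "rvec x y (Suc t) = refl_all (minus_side x t) (rvec x y t)"
  using Sigma_eq_refl_all_minus_side[of t x] by (simp split: if_splits)

declare svec.simps(2) [simp del] rvec.simps(2) [simp del]

lemma minus_side_iff_mod: "minus_side x t z \<longleftrightarrow> tdist x z mod 2 \<noteq> t mod 2"
  unfolding minus_side_def by presburger

lemma minus_part_eq: "minus_part x t = side_sum (minus_side x t)"
  by (simp add: fun_eq_iff minus_part_def side_sum_def minus_side_iff_mod)

lemma plus_part_eq: "plus_part x t = side_sum (\<lambda>z. \<not> minus_side x t z)"
  by (simp add: fun_eq_iff plus_part_def side_sum_def minus_side_iff_mod)

lemma side_sums_orbit:
  assumes step: "\<And>t. v (Suc t) = refl_all (minus_side x t) (v t)"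
    and fin: "finite {z. v 0 z \<noteq> 0}"
    and minus0: "minus_part x 0 (v 0) = fibz c"
    and plus0: "plus_part x 0 (v 0) = fibz (c + 2)"
  shows "finite {z. v t z \<noteq> 0} \<and> minus_part x t (v t) = fibz (2 * int t + c)
    \<and> plus_part x t (v t) = fibz (2 * int t + c + 2)"
proof (induction t)
  case 0
  thus ?case using fin minus0 plus0 by (simp add: add.commute)
next
  case (Suc t)
  let ?P = "minus_side x t"
  have "minus_part x (Suc t) (v (Suc t)) = side_sum (\<lambda>z. \<not> ?P z) (v t)"
    by (simp add: step minus_part_eq minus_side_Suc side_sum_refl_all_other)
  moreover have
    "plus_part x (Suc t) (v (Suc t)) = 3 * side_sum (\<lambda>z. \<not> ?P z) (v t) - side_sum ?P (v t)"
    using Suc.IH bipartition_minus_side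
    by (simp add: step plus_part_eq minus_side_Suc side_sum_refl_all)
  moreover have "fibz (2 * int t + c + 4) = 3 * fibz (2 * int t + c + 2) - fibz (2 * int t + c)"
    using fibz_rec2[of "2 * int t + c"] by (simp add: add.assoc)
  ultimately show ?case
    using Suc.IH
    by (simp add: step finite_support_refl_all minus_part_eq plus_part_eq algebra_simps)
qed

lemma nonneg_orbit:
  assumes step: "\<And>t. v (Suc t) = refl_all (minus_side x t) (v t)"
    and "\<forall>z. 0 \<le> v k z" "neighbour_bounded (minus_side x k) (v k)" "k \<le> t"
  shows "\<forall>z. 0 \<le> v t z"
proof -
  from \<open>k \<le> t\<close> have "(\<forall>z. 0 \<le> v t z) \<and> neighbour_bounded (minus_side x t) (v t)"
  proof (induction rule: dec_induct)
    case (step t)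
    thus ?case
      using nonneg_refl_all neighbour_bounded_refl_all bipartition_minus_side
      by (simp add: assms(1) minus_side_Suc)
  qed (use assms in simp)
  thus ?thesis ..
qed

lemma neighbour_bounded_svec_0: "neighbour_bounded (minus_side x 0) (svec x 0)"
  by (auto simp: neighbour_bounded_def sbasis_def minus_side_self sum_nonneg)

text \<open>rvec x y 0 violates neighbour_bounded at y, so positivity of rvec is started at t = 1.\<close>

lemma rvec_1:
  assumes "adj x y"
  shows "rvec x y 1 = (\<lambda>z. if z = x \<or> (adj z x \<and> z \<noteq> y) then 1 else 0)"
proof
  fix z
  have r1: "rvec x y 1 = refl_all (minus_side x 0) (rvec x y 0)"
    using rvec_Suc[of x y 0] by simp
  have x: "\<not> minus_side x 0 x" and y: "minus_side x 0 y" and "x \<noteq> y"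
    using assms minus_side_self minus_side_adj adj_irrefl by auto
  have sum_r0: "(\<Sum>u\<in>neighbours z. (if u = x then 1 else 0) + (if u = y then 1 else 0)) =
      (if adj x z then 1 else 0) + (if adj y z then 1 else 0)"
    using finite_neighbours by (simp add: sum.distrib neighbours_def)
  have bip: "adj u v \<Longrightarrow> minus_side x 0 u \<longleftrightarrow> \<not> minus_side x 0 v" for u v
    using bipartition_minus_side by (auto simp: bipartition_def)
  have "refl_all (minus_side x 0) (rvec x y 0) z =
      (if z = x \<or> (adj z x \<and> z \<noteq> y) then 1 else 0)"
  proof (cases "minus_side x 0 z")
    case True
    thus ?thesis
      using assms x y \<open>x \<noteq> y\<close> bip[of x z] bip[of y z] adj_sym[of z x] adj_sym[of x z]
        adj_sym[of x y] adj_irrefl[of y]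
      by (auto simp: refl_all_neighbours sum_r0 sbasis_def)
  next
    case False
    thus ?thesis
      using x y bip[of z x] by (auto simp: refl_all_neighbours sbasis_def)
  qed
  thus "rvec x y 1 z = (if z = x \<or> (adj z x \<and> z \<noteq> y) then 1 else 0)"
    unfolding r1 .
qed

lemma neighbour_bounded_rvec_1:
  assumes "adj x y"
  shows "neighbour_bounded (minus_side x 1) (rvec x y 1)"
  unfolding neighbour_bounded_def
proof (intro allI impI)
  fix z w assume z: "minus_side x 1 z" and "adj w z"
  have nonneg: "0 \<le> rvec x y 1 u" for u
    unfolding rvec_1[OF assms] by simp
  show "rvec x y 1 z \<le> (\<Sum>u\<in>neighbours z - {w}. rvec x y 1 u)"
  proof (cases "z = x")
    case True
    obtain u where u: "adj u x" "u \<noteq> w" "u \<noteq> y"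
      using neighbour_avoiding by blast
    have "rvec x y 1 x = rvec x y 1 u"
      using u unfolding rvec_1[OF assms] by simp
    also have "\<dots> \<le> (\<Sum>v\<in>neighbours x - {w}. rvec x y 1 v)"
      using u nonneg finite_neighbours by (intro member_le_sum) (auto simp: neighbours_def)
    finally show ?thesis using True by simp
  next
    case False
    have "\<not> adj z x"
      using z bipartition_minus_side[of x 1] minus_side_self[of x 1] by (auto simp: bipartition_def)
    thus ?thesis
      using False nonneg unfolding rvec_1[OF assms] by (simp add: sum_nonneg)
  qed
qed

lemma nonneg_svec: "0 \<le> svec x t z"
  using nonneg_orbit[where v = "svec x" and k = 0, OF svec_Suc _ neighbour_bounded_svec_0]
  by (simp add: sbasis_def)

lemma nonneg_rvec:
  assumes "adj x y"
  shows "0 \<le> rvec x y t z"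
proof (cases t)
  case 0
  thus ?thesis by (simp add: sbasis_def)
next
  case (Suc n)
  thus ?thesis
    using nonneg_orbit[where v = "rvec x y" and k = 1, OF rvec_Suc _ neighbour_bounded_rvec_1[OF assms]]
    unfolding rvec_1[OF assms] by simp
qed

lemma svec_side_sums:
  "minus_part x t (svec x t) = fibz (2 * int t) \<and> plus_part x t (svec x t) = fibz (2 * int t + 2)"
  using side_sums_orbit[where v = "svec x" and c = 0, OF svec_Suc] minus_side_self[of x 0]
  by (simp add: minus_part_eq plus_part_eq side_sum_sbasis finite_support_sbasis fibz_0 fibz_2)

lemma rvec_side_sums:
  assumes "adj x y"
  shows "minus_part x t (rvec x y t) = fibz (2 * int t - 1)
    \<and> plus_part x t (rvec x y t) = fibz (2 * int t + 1)"
proof -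
  have "finite {z. sbasis x z + sbasis y z \<noteq> 0}"
    by (rule finite_subset[of _ "{x, y}"]) (auto simp: sbasis_def)
  thus ?thesis
    using side_sums_orbit[where v = "rvec x y" and c = "-1", OF rvec_Suc]
      minus_side_self[of x 0] minus_side_adj[OF assms, of 0]
    by (simp add: minus_part_eq plus_part_eq side_sum_add side_sum_sbasis finite_support_sbasis
        fibz_1 fibz_minus_1 add.commute)
qed

theorem proposition2p1:
  fixes x y :: tree3 and t :: nat
  assumes "adj x y"
  shows "(\<forall>z. 0 \<le> svec x t z) \<and> (\<forall>z. 0 \<le> rvec x y t z)
    \<and> minus_part x t (svec x t) = fibz (2 * int t)
    \<and> plus_part x t (svec x t) = fibz (2 * int t + 2)
    \<and> minus_part x t (rvec x y t) = fibz (2 * int t - 1)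
    \<and> plus_part x t (rvec x y t) = fibz (2 * int t + 1)"
  using nonneg_svec nonneg_rvec[OF assms] svec_side_sums rvec_side_sums[OF assms] by blast

end
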